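(* For $i=1,2$ let $X_i$ be a set with a distinguished point $e_i\in X_i$ and let $K_i\colon X_i\times X_i\to\mathbb{R}$ be a kernel with $K_i(x,y)=K_i(y,x)\geq0$ and $K_i(x,x)=0$ that is conditionally strictly negative definite. Let $X=X_1\sqcup X_2/\!\sim$ where $e_1\sim e_2$ (so $X_1,X_2\subseteq X$ with $X_1\cap X_2=\{e_1\}=\{e_2\}$), and define $K\colon X\times X\to\mathbb{R}$ by $K(x,y)=K_1(x,y)$ if $x,y\in X_1$; $K(x,y)=K_1(x,e_1)+K_2(e_2,y)$ if $x\in X_1,y\in X_2$; $K(x,y)=K_2(x,e_2)+K_1(e_1,y)$ if $x\in X_2,y\in X_1$; $K(x,y)=K_2(x,y)$ if $x,y\in X_2$. Then $K$ is well defined, satisfies $K(x,y)=K(y,x)\ge0$, $K(x,x)=0$, and is conditionally strictly negative definite.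
   Context: A kernel $K$ on a set $Y$ is conditionally strictly negative definite if for every finitely supported $\lambda\colon Y\to\mathbb{C}$, $\lambda\neq0$, with $\sum_y\lambda(y)=0$ one has $\sum_{x,y}\lambda(x)\overline{\lambda(y)}K(x,y)<0$. *)

theory Defs
  imports Complex_Main
begin

text \<open>Finitely supported functions on Y are modelled as functions on the ambient type whose
support is finite and contained in Y.\<close>

definition cond_strict_neg_def :: "'a set \<Rightarrow> ('a \<Rightarrow> 'a \<Rightarrow> real) \<Rightarrow> bool" where
  "cond_strict_neg_def Y K \<longleftrightarrow>
     (\<forall>l :: 'a \<Rightarrow> complex.
        finite {x. l x \<noteq> 0} \<and> {x. l x \<noteq> 0} \<subseteq> Y \<and> {x. l x \<noteq> 0} \<noteq> {} \<and>
        (\<Sum>x\<in>{x. l x \<noteq> 0}. l x) = 0 \<longrightarrow>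
        (let s = (\<Sum>x\<in>{x. l x \<noteq> 0}. \<Sum>y\<in>{x. l x \<noteq> 0}. l x * cnj (l y) * complex_of_real (K x y))
         in Im s = 0 \<and> Re s < 0))"

definition wedge_kernel_clauses ::
  "'a set \<Rightarrow> 'a set \<Rightarrow> 'a \<Rightarrow> ('a \<Rightarrow> 'a \<Rightarrow> real) \<Rightarrow> ('a \<Rightarrow> 'a \<Rightarrow> real) \<Rightarrow> ('a \<Rightarrow> 'a \<Rightarrow> real) \<Rightarrow> bool" where
  "wedge_kernel_clauses X1 X2 e K1 K2 K \<longleftrightarrow>
     (\<forall>x\<in>X1. \<forall>y\<in>X1. K x y = K1 x y) \<and>
     (\<forall>x\<in>X1. \<forall>y\<in>X2. K x y = K1 x e + K2 e y) \<and>
     (\<forall>x\<in>X2. \<forall>y\<in>X1. K x y = K2 x e + K1 e y) \<and>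
     (\<forall>x\<in>X2. \<forall>y\<in>X2. K x y = K2 x y)"

end

theory Submission
  imports Defs
begin

text \<open>With the retractions \<open>r\<^sub>i\<close> of \<open>X\<^sub>1 \<union> X\<^sub>2\<close> onto \<open>X\<^sub>i\<close> that collapse the other
  summand to \<open>e\<close>, the glued kernel is \<open>K x y = K\<^sub>1 (r\<^sub>1 x) (r\<^sub>1 y) + K\<^sub>2 (r\<^sub>2 x) (r\<^sub>2 y)\<close>.
  Hence the quadratic form of \<open>K\<close> at \<open>\<lambda>\<close> is the sum of the quadratic forms of \<open>K\<^sub>i\<close> at the
  pushforwards \<open>r\<^sub>i\<^sub>* \<lambda>\<close>, which again have total mass zero, so both terms are \<open>\<le> 0\<close>. If both
  vanish then both pushforwards vanish; every point other than \<open>e\<close> is alone in its fibre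
  under \<open>r\<^sub>1\<close> or \<open>r\<^sub>2\<close>, so \<open>\<lambda>\<close> is supported in \<open>{e}\<close>, and mass zero forces \<open>\<lambda> = 0\<close>.\<close>

definition quad_form :: "('a \<Rightarrow> 'a \<Rightarrow> real) \<Rightarrow> ('a \<Rightarrow> complex) \<Rightarrow> 'a set \<Rightarrow> complex" where
  "quad_form K l S = (\<Sum>x\<in>S. \<Sum>y\<in>S. l x * cnj (l y) * complex_of_real (K x y))"

definition pushforward :: "('a \<Rightarrow> 'b) \<Rightarrow> 'a set \<Rightarrow> ('a \<Rightarrow> complex) \<Rightarrow> 'b \<Rightarrow> complex" where
  "pushforward g S l u = (\<Sum>x\<in>{x\<in>S. g x = u}. l x)"

definition retraction :: "'a set \<Rightarrow> 'a \<Rightarrow> 'a \<Rightarrow> 'a" where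
  "retraction A e x = (if x \<in> A then x else e)"

definition wedge_kernel ::
  "'a set \<Rightarrow> 'a set \<Rightarrow> 'a \<Rightarrow> ('a \<Rightarrow> 'a \<Rightarrow> real) \<Rightarrow> ('a \<Rightarrow> 'a \<Rightarrow> real) \<Rightarrow> 'a \<Rightarrow> 'a \<Rightarrow> real" where
  "wedge_kernel X1 X2 e K1 K2 x y =
     K1 (retraction X1 e x) (retraction X1 e y) + K2 (retraction X2 e x) (retraction X2 e y)"

lemma quad_form_zero [simp]: "quad_form K (\<lambda>_. 0) S = 0"
  by (simp add: quad_form_def)

lemma quad_form_cong:
  "(\<And>x y. x \<in> S \<Longrightarrow> y \<in> S \<Longrightarrow> K x y = L x y) \<Longrightarrow> quad_form K l S = quad_form L l S"
  by (simp add: quad_form_def)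

lemma quad_form_add_kernel:
  "quad_form (\<lambda>x y. K x y + L x y) l S = quad_form K l S + quad_form L l S"
  by (simp add: quad_form_def distrib_left sum.distrib)

lemma quad_form_mono_neutral:
  assumes "finite S" "{x. l x \<noteq> 0} \<subseteq> A" "A \<subseteq> S"
  shows "quad_form K l A = quad_form K l S"
proof -
  have off_A: "l x = 0" if "x \<notin> A" for x
    using assms(2) that by blast
  have "quad_form K l A = (\<Sum>x\<in>A. \<Sum>y\<in>S. l x * cnj (l y) * complex_of_real (K x y))"
    unfolding quad_form_def
    by (intro sum.cong refl sum.mono_neutral_left) (use assms in auto)
  also have "\<dots> = quad_form K l S"
    unfolding quad_form_def by (rule sum.mono_neutral_left) (use assms off_A in auto)
  finally show ?thesis .
qed

lemma quad_form_cond_strict_neg: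
  assumes K: "cond_strict_neg_def Y K" and "finite S"
    and supp_S: "{x. l x \<noteq> 0} \<subseteq> S" and supp_Y: "{x. l x \<noteq> 0} \<subseteq> Y"
    and mass: "sum l S = 0" and nonzero: "l \<noteq> (\<lambda>_. 0)"
  shows "Im (quad_form K l S) = 0 \<and> Re (quad_form K l S) < 0"
proof -
  have "sum l {x. l x \<noteq> 0} = sum l S"
    by (rule sum.mono_neutral_left) (use assms in auto)
  moreover have "{x. l x \<noteq> 0} \<noteq> {}"
    using nonzero by auto
  moreover have "finite {x. l x \<noteq> 0}"
    using \<open>finite S\<close> supp_S finite_subset by blast
  ultimately have "Im (quad_form K l {x. l x \<noteq> 0}) = 0 \<and> Re (quad_form K l {x. l x \<noteq> 0}) < 0"
    using K supp_Y mass unfolding cond_strict_neg_def_def by (simp add: quad_form_def Let_def)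
  then show ?thesis
    using quad_form_mono_neutral[OF \<open>finite S\<close> order_refl supp_S] by simp
qed

lemma sum_pushforward:
  assumes "finite S"
  shows "sum (pushforward g S l) (g ` S) = sum l S"
  unfolding pushforward_def using sum.image_gen[OF assms, of l g] by simp

lemma pushforward_support_subset: "{u. pushforward g S l u \<noteq> 0} \<subseteq> g ` S"
proof -
  have "pushforward g S l u = 0" if "u \<notin> g ` S" for u
  proof -
    have "{x\<in>S. g x = u} = {}"
      using that by blast
    then show ?thesis
      unfolding pushforward_def by (simp only: sum.empty)
  qed
  then show ?thesis
    by blast
qed

lemma quad_form_pushforward:
  assumes S: "finite S"
  shows "quad_form (\<lambda>x y. F (g x) (g y)) l S = quad_form F (pushforward g S l) (g ` S)"
proof -
  let ?l = "pushforward g S l"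
  have inner: "(\<Sum>y\<in>S. l x * cnj (l y) * complex_of_real (F u (g y)))
      = (\<Sum>v\<in>g ` S. l x * cnj (?l v) * complex_of_real (F u v))" for x u
  proof -
    have "(\<Sum>y\<in>S. l x * cnj (l y) * complex_of_real (F u (g y)))
       = (\<Sum>v\<in>g ` S. \<Sum>y\<in>{y\<in>S. g y = v}. l x * cnj (l y) * complex_of_real (F u (g y)))"
      by (rule sum.image_gen[OF S])
    also have "\<dots> = (\<Sum>v\<in>g ` S. \<Sum>y\<in>{y\<in>S. g y = v}. l x * cnj (l y) * complex_of_real (F u v))"
      by (intro sum.cong refl) auto
    finally show ?thesis
      by (simp add: pushforward_def sum_distrib_left sum_distrib_right)
  qed
  have "quad_form (\<lambda>x y. F (g x) (g y)) l S
      = (\<Sum>u\<in>g ` S. \<Sum>x\<in>{x\<in>S. g x = u}. \<Sum>y\<in>S. l x * cnj (l y) * complex_of_real (F (g x) (g y)))"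
    unfolding quad_form_def by (rule sum.image_gen[OF S])
  also have "\<dots> = (\<Sum>u\<in>g ` S. \<Sum>x\<in>{x\<in>S. g x = u}. \<Sum>v\<in>g ` S. l x * cnj (?l v) * complex_of_real (F u v))"
    by (intro sum.cong refl) (auto simp: inner)
  also have "\<dots> = (\<Sum>u\<in>g ` S. \<Sum>v\<in>g ` S. \<Sum>x\<in>{x\<in>S. g x = u}. l x * cnj (?l v) * complex_of_real (F u v))"
    by (rule sum.cong[OF refl], rule sum.swap)
  also have "\<dots> = quad_form F ?l (g ` S)"
    unfolding quad_form_def by (simp add: sum_distrib_right pushforward_def[of g S l] del: cnj_sum)
  finally show ?thesis .
qed

lemma pullback_quad_form_cond_strict_neg:
  assumes K: "cond_strict_neg_def Y K" and S: "finite S" and "g ` S \<subseteq> Y" and "sum l S = 0"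
  defines "q \<equiv> quad_form (\<lambda>x y. K (g x) (g y)) l S"
  shows "Im q = 0 \<and> Re q \<le> 0 \<and> (pushforward g S l \<noteq> (\<lambda>_. 0) \<longrightarrow> Re q < 0)"
proof (cases "pushforward g S l = (\<lambda>_. 0)")
  case True
  then show ?thesis
    by (simp add: q_def quad_form_pushforward[OF S])
next
  case False
  then have "Im q = 0 \<and> Re q < 0"
    unfolding q_def quad_form_pushforward[OF S]
    using assms pushforward_support_subset[of g S l]
    by (intro quad_form_cond_strict_neg[OF K]) (auto simp: sum_pushforward)
  then show ?thesis
    by simp
qed

lemma eq_zero_if_pushforwards_vanish:
  assumes S: "finite S" and "e \<in> S" and supp: "{x. l x \<noteq> 0} \<subseteq> S" and mass: "sum l S = 0"
    and fibres: "\<And>x. x \<in> S - {e} \<Longrightarrow> {y\<in>S. f y = f x} = {x} \<or> {y\<in>S. g y = g x} = {x}"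
    and "pushforward f S l = (\<lambda>_. 0)" "pushforward g S l = (\<lambda>_. 0)"
  shows "l = (\<lambda>_. 0)"
proof -
  have off_e: "l x = 0" if "x \<noteq> e" for x
  proof (cases "x \<in> S")
    case True
    then have "l x = pushforward f S l (f x) \<or> l x = pushforward g S l (g x)"
      using fibres[of x] \<open>x \<noteq> e\<close> by (auto simp: pushforward_def)
    then show ?thesis
      using assms(6,7) by simp
  qed (use supp in auto)
  have "sum l S = l e + sum l (S - {e})"
    using S \<open>e \<in> S\<close> by (simp add: sum.remove)
  moreover have "sum l (S - {e}) = 0"
    using off_e by (intro sum.neutral) auto
  ultimately have "l e = 0"
    using mass by simp
  with off_e have "l x = 0" for x
    by (cases "x = e") auto
  then show ?thesis
    by (simp add: fun_eq_iff)
qed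

lemma cond_strict_neg_def_sum_of_pullbacks:
  fixes K :: "'a \<Rightarrow> 'a \<Rightarrow> real"
  assumes K1: "cond_strict_neg_def Y1 K1" and K2: "cond_strict_neg_def Y2 K2"
    and f: "f ` Y \<subseteq> Y1" and g: "g ` Y \<subseteq> Y2" and "e \<in> Y"
    and K: "\<And>x y. x \<in> Y \<Longrightarrow> y \<in> Y \<Longrightarrow> K x y = K1 (f x) (f y) + K2 (g x) (g y)"
    and fibres: "\<And>x. x \<in> Y - {e} \<Longrightarrow> {y\<in>Y. f y = f x} = {x} \<or> {y\<in>Y. g y = g x} = {x}"
  shows "cond_strict_neg_def Y K"
  unfolding cond_strict_neg_def_def
proof (intro allI impI)
  fix l :: "'a \<Rightarrow> complex"
  define D where "D = {x. l x \<noteq> 0}"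
  define S where "S = insert e D"
  assume H: "finite {x. l x \<noteq> 0} \<and> {x. l x \<noteq> 0} \<subseteq> Y \<and> {x. l x \<noteq> 0} \<noteq> {} \<and> sum l {x. l x \<noteq> 0} = 0"
  have S: "finite S" and "S \<subseteq> Y" and "D \<subseteq> S"
    using H \<open>e \<in> Y\<close> by (auto simp: S_def D_def)
  have "sum l S = sum l D"
    by (rule sum.mono_neutral_right[OF S \<open>D \<subseteq> S\<close>]) (simp add: D_def)
  then have mass: "sum l S = 0"
    using H by (simp add: D_def)
  have "quad_form K l D = quad_form K l S"
    by (rule quad_form_mono_neutral[OF S _ \<open>D \<subseteq> S\<close>]) (simp add: D_def)
  also have "\<dots> = quad_form (\<lambda>x y. K1 (f x) (f y) + K2 (g x) (g y)) l S"
    using \<open>S \<subseteq> Y\<close> by (intro quad_form_cong K) auto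
  finally have q: "quad_form K l D
      = quad_form (\<lambda>x y. K1 (f x) (f y)) l S + quad_form (\<lambda>x y. K2 (g x) (g y)) l S"
    by (simp only: quad_form_add_kernel)
  have fibres_S: "{y\<in>S. f y = f x} = {x} \<or> {y\<in>S. g y = g x} = {x}" if "x \<in> S - {e}" for x
    using fibres[of x] that \<open>S \<subseteq> Y\<close> by blast
  have "pushforward f S l \<noteq> (\<lambda>_. 0) \<or> pushforward g S l \<noteq> (\<lambda>_. 0)"
  proof (rule ccontr)
    have "e \<in> S" and "{x. l x \<noteq> 0} \<subseteq> S"
      using \<open>D \<subseteq> S\<close> by (simp_all add: S_def D_def)
    moreover assume "\<not> ?thesis"
    ultimately have "l = (\<lambda>_. 0)"
      using eq_zero_if_pushforwards_vanish[OF S _ _ mass fibres_S] by blast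
    with H show False
      by simp
  qed
  moreover have "f ` S \<subseteq> Y1" "g ` S \<subseteq> Y2"
    using f g \<open>S \<subseteq> Y\<close> by blast+
  ultimately have "Im (quad_form K l D) = 0 \<and> Re (quad_form K l D) < 0"
    unfolding q
    using pullback_quad_form_cond_strict_neg[OF K1 S _ mass, of f]
      pullback_quad_form_cond_strict_neg[OF K2 S _ mass, of g]
    by auto
  then show "let s = \<Sum>x\<in>{x. l x \<noteq> 0}. \<Sum>y\<in>{x. l x \<noteq> 0}. l x * cnj (l y) * complex_of_real (K x y)
    in Im s = 0 \<and> Re s < 0"
    by (simp add: D_def quad_form_def)
qed

lemma retraction_in: "e \<in> A \<Longrightarrow> retraction A e x \<in> A"
  by (simp add: retraction_def)

lemma retraction_eq_self [simp]: "x \<in> A \<Longrightarrow> retraction A e x = x"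
  by (simp add: retraction_def)

lemma retraction_eq_base:
  "X1 \<inter> X2 = {e} \<Longrightarrow> x \<in> X1 \<Longrightarrow> retraction X2 e x = e"
  by (auto simp: retraction_def)

lemma wedge_kernel_clauses_wedge_kernel:
  assumes inter: "X1 \<inter> X2 = {e}" and "K1 e e = 0" "K2 e e = 0"
  shows "wedge_kernel_clauses X1 X2 e K1 K2 (wedge_kernel X1 X2 e K1 K2)"
proof -
  have "X2 \<inter> X1 = {e}"
    using inter by blast
  then show ?thesis
    using assms retraction_eq_base[OF inter] retraction_eq_base[of X2 X1 e]
    by (simp add: wedge_kernel_clauses_def wedge_kernel_def)
qed

lemma wedge_kernel_clauses_eq_wedge_kernel:
  assumes inter: "X1 \<inter> X2 = {e}" and "K1 e e = 0" "K2 e e = 0"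
    and K: "wedge_kernel_clauses X1 X2 e K1 K2 K" and x: "x \<in> X1 \<union> X2" and y: "y \<in> X1 \<union> X2"
  shows "K x y = wedge_kernel X1 X2 e K1 K2 x y"
proof -
  have r2_base: "retraction X2 e z = e" if "z \<in> X1" for z
    using retraction_eq_base[OF inter that] .
  have r1_base: "retraction X1 e z = e" if "z \<in> X2" for z
    using retraction_eq_base[of X2 X1 e z] inter that by blast
  have c: "\<And>x y. x \<in> X1 \<Longrightarrow> y \<in> X1 \<Longrightarrow> K x y = K1 x y"
    "\<And>x y. x \<in> X1 \<Longrightarrow> y \<in> X2 \<Longrightarrow> K x y = K1 x e + K2 e y"
    "\<And>x y. x \<in> X2 \<Longrightarrow> y \<in> X1 \<Longrightarrow> K x y = K2 x e + K1 e y"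
    "\<And>x y. x \<in> X2 \<Longrightarrow> y \<in> X2 \<Longrightarrow> K x y = K2 x y"
    using K unfolding wedge_kernel_clauses_def by blast+
  show ?thesis
  proof (cases "x \<in> X1"; cases "y \<in> X1")
    assume "x \<in> X1" "y \<in> X1"
    then show ?thesis using c(1) r2_base assms(3) by (simp add: wedge_kernel_def)
  next
    assume "x \<in> X1" "y \<notin> X1"
    then show ?thesis using c(2) r2_base r1_base y by (simp add: wedge_kernel_def)
  next
    assume "x \<notin> X1" "y \<in> X1"
    then show ?thesis using c(3) r2_base r1_base x by (simp add: wedge_kernel_def)
  next
    assume "x \<notin> X1" "y \<notin> X1"
    then show ?thesis using c(4) r1_base x y assms(2) by (simp add: wedge_kernel_def)
  qed
qed

lemma wedge_retraction_fibres:
  assumes "X1 \<inter> X2 = {e}" and "x \<in> (X1 \<union> X2) - {e}"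
  shows "{y \<in> X1 \<union> X2. retraction X1 e y = retraction X1 e x} = {x}
    \<or> {y \<in> X1 \<union> X2. retraction X2 e y = retraction X2 e x} = {x}"
proof (cases "x \<in> X1")
  case True
  then have "{y \<in> X1 \<union> X2. retraction X1 e y = retraction X1 e x} = {x}"
    using assms(2) by (auto simp: retraction_def)
  then show ?thesis ..
next
  case False
  then have "{y \<in> X1 \<union> X2. retraction X2 e y = retraction X2 e x} = {x}"
    using assms by (auto simp: retraction_def)
  then show ?thesis ..
qed

theorem mainTheorem6:
  fixes X1 X2 :: "'a set" and e :: 'a and K1 K2 :: "'a \<Rightarrow> 'a \<Rightarrow> real"
  assumes inter: "X1 \<inter> X2 = {e}"
    and K1_sym: "\<forall>x\<in>X1. \<forall>y\<in>X1. K1 x y = K1 y x \<and> K1 x y \<ge> 0"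
    and K1_diag: "\<forall>x\<in>X1. K1 x x = 0"
    and K1_csnd: "cond_strict_neg_def X1 K1"
    and K2_sym: "\<forall>x\<in>X2. \<forall>y\<in>X2. K2 x y = K2 y x \<and> K2 x y \<ge> 0"
    and K2_diag: "\<forall>x\<in>X2. K2 x x = 0"
    and K2_csnd: "cond_strict_neg_def X2 K2"
  shows "(\<exists>K. wedge_kernel_clauses X1 X2 e K1 K2 K) \<and>
         (\<forall>K. wedge_kernel_clauses X1 X2 e K1 K2 K \<longrightarrow>
            (\<forall>x\<in>X1 \<union> X2. \<forall>y\<in>X1 \<union> X2. K x y = K y x \<and> K x y \<ge> 0) \<and>
            (\<forall>x\<in>X1 \<union> X2. K x x = 0) \<and>
            cond_strict_neg_def (X1 \<union> X2) K)"
proof (intro conjI allI impI)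
  have e: "e \<in> X1" "e \<in> X2" and diag_e: "K1 e e = 0" "K2 e e = 0"
    using inter K1_diag K2_diag by auto
  show "\<exists>K. wedge_kernel_clauses X1 X2 e K1 K2 K"
    using wedge_kernel_clauses_wedge_kernel[of X1 X2 e K1 K2, OF inter diag_e] by blast
  fix K
  assume "wedge_kernel_clauses X1 X2 e K1 K2 K"
  note K = wedge_kernel_clauses_eq_wedge_kernel[of X1 X2 e K1 K2 K, OF inter diag_e this]
  have r: "retraction X1 e x \<in> X1" "retraction X2 e x \<in> X2" for x
    using e by (simp_all add: retraction_in)
  show "\<forall>x\<in>X1 \<union> X2. \<forall>y\<in>X1 \<union> X2. K x y = K y x \<and> K x y \<ge> 0"
    using K1_sym K2_sym r by (simp add: K wedge_kernel_def)
  show "\<forall>x\<in>X1 \<union> X2. K x x = 0"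
    using K1_diag K2_diag r by (simp add: K wedge_kernel_def)
  show "cond_strict_neg_def (X1 \<union> X2) K"
  proof (rule cond_strict_neg_def_sum_of_pullbacks[OF K1_csnd K2_csnd])
    show "retraction X1 e ` (X1 \<union> X2) \<subseteq> X1" "retraction X2 e ` (X1 \<union> X2) \<subseteq> X2"
      using r by blast+
    show "K x y = K1 (retraction X1 e x) (retraction X1 e y) + K2 (retraction X2 e x) (retraction X2 e y)"
      if "x \<in> X1 \<union> X2" "y \<in> X1 \<union> X2" for x y
      using that by (simp add: K wedge_kernel_def)
  qed (use e wedge_retraction_fibres[OF inter] in auto)
qed

end
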